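(* Let $f:\mathbb{E}\to\mathbb{R}\cup\{+\infty\}$ be a proper extended real function which is invex in terms of the lower Hadamard directional derivative. Then $f$ is second-order invex.
   Context: $\mathbb{E}$ is a real finite-dimensional Euclidean space; $\operatorname{dom} f=\{x:f(x)<+\infty\}$. For $x\in\operatorname{dom} f$: $f^{(1)}_-(x;u)=\liminf_{t\downarrow 0,\,u'\to u} t^{-1}[f(x+tu')-f(x)]$; $\partial^{(1)}_- f(x)=\{x^*\in L^1(\mathbb{E}) : x^*(u)\le f^{(1)}_-(x;u)\ \forall u\}$; when $0\in\partial^{(1)}_- f(x)$, $f^{(2)}_-(x;0;u)=\liminf_{t\downarrow 0,\,u'\to u} 2t^{-2}[f(x+tu')-f(x)]$. Arithmetic in $[-\infty,+\infty]$ with a fixed convention for $(+\infty)+(-\infty)$. $f$ is invex in terms of the lower Hadamard directional derivative iff there is a map $\eta:\mathbb{E}\times\mathbb{E}\to\mathbb{E}$ with $f(y)-f(x)\ge f^{(1)}_-(x;\eta(x,y))$ for all $x\in\operatorname{dom} f$, $y\in\mathbb{E}$. $f$ is second-order invex iff for every $\bar x\in\operatorname{dom} f$ with $0\in\partial^{(1)}_- f(\bar x)$ and every $x\in\mathbb{E}$ there exist $\eta_1,\eta_2\in\mathbb{E}$ with $f(x)-f(\bar x)\ge f^{(1)}_-(\bar x;\eta_1)+f^{(2)}_-(\bar x;0;\eta_2)$. *)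

theory Defs
  imports "HOL-Analysis.Analysis"
begin

definition edom :: "('a \<Rightarrow> ereal) \<Rightarrow> 'a set" where
  "edom f = {x. f x < \<infinity>}"

definition proper_fun :: "('a \<Rightarrow> ereal) \<Rightarrow> bool" where
  "proper_fun f \<longleftrightarrow> (\<forall>x. f x \<noteq> -\<infinity>) \<and> edom f \<noteq> {}"

definition lhdd :: "('a::euclidean_space \<Rightarrow> ereal) \<Rightarrow> 'a \<Rightarrow> 'a \<Rightarrow> ereal" where
  "lhdd f x u = Liminf (at_right (0::real) \<times>\<^sub>F nhds u)
      (\<lambda>(t, u'). ereal (1 / t) * (f (x + t *\<^sub>R u') - f x))"

definition lh_subdiff :: "('a::euclidean_space \<Rightarrow> ereal) \<Rightarrow> 'a \<Rightarrow> ('a \<Rightarrow> real) set" where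
  "lh_subdiff f x = {xs. linear xs \<and> (\<forall>u. ereal (xs u) \<le> lhdd f x u)}"

text \<open>Second-order lower Hadamard derivative in direction u at x with respect to x* = 0.\<close>
definition lhdd2 :: "('a::euclidean_space \<Rightarrow> ereal) \<Rightarrow> 'a \<Rightarrow> 'a \<Rightarrow> ereal" where
  "lhdd2 f x u = Liminf (at_right (0::real) \<times>\<^sub>F nhds u)
      (\<lambda>(t, u'). ereal (2 / t\<^sup>2) * (f (x + t *\<^sub>R u') - f x))"

definition invex_lh :: "('a::euclidean_space \<Rightarrow> ereal) \<Rightarrow> bool" where
  "invex_lh f \<longleftrightarrow> (\<exists>\<eta> :: 'a \<Rightarrow> 'a \<Rightarrow> 'a.
      \<forall>x \<in> edom f. \<forall>y. f y - f x \<ge> lhdd f x (\<eta> x y))"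

definition second_order_invex :: "('a::euclidean_space \<Rightarrow> ereal) \<Rightarrow> bool" where
  "second_order_invex f \<longleftrightarrow> (\<forall>xb \<in> edom f. (\<lambda>_. 0) \<in> lh_subdiff f xb \<longrightarrow>
      (\<forall>x. \<exists>\<eta>1 \<eta>2. f x - f xb \<ge> lhdd f xb \<eta>1 + lhdd2 f xb \<eta>2))"

end

theory Submission
  imports Defs
begin

text \<open>The direction \<open>\<eta>\<^sub>1 = \<eta> x\<^sub>b x\<close> from first-order invexity already
  bounds \<open>f x - f x\<^sub>b\<close>, so it suffices to take \<open>\<eta>\<^sub>2 = 0\<close>: along \<open>u' = 0\<close> every
  difference quotient of \<open>f\<close> vanishes, hence the second-order lower Hadamard
  derivative in direction \<open>0\<close> is at most \<open>0\<close>.\<close>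

lemma Liminf_prod_nhds_le_Liminf_slice:
  fixes g :: "'a \<times> 'b::topological_space \<Rightarrow> 'c::complete_lattice"
  shows "Liminf (F \<times>\<^sub>F nhds u) g \<le> Liminf F (\<lambda>t. g (t, u))"
  unfolding Liminf_def
proof (rule SUP_least)
  fix P assume "P \<in> {P. eventually P (F \<times>\<^sub>F nhds u)}"
  then obtain Pt Pu where Pt: "eventually Pt F" and Pu: "eventually Pu (nhds u)"
    and P: "\<And>t v. Pt t \<Longrightarrow> Pu v \<Longrightarrow> P (t, v)"
    unfolding eventually_prod_filter by auto
  have "Pu u" using Pu eventually_nhds_x_imp_x by blast
  then have "(INF x\<in>Collect P. g x) \<le> (INF t\<in>Collect Pt. g (t, u))"
    using P by (auto intro!: INF_mono)
  also have "\<dots> \<le> (SUP Q\<in>{Q. eventually Q F}. INF t\<in>Collect Q. g (t, u))"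
    using Pt by (auto intro: SUP_upper)
  finally show "(INF x\<in>Collect P. g x) \<le> (SUP Q\<in>{Q. eventually Q F}. INF t\<in>Collect Q. g (t, u))" .
qed

lemma lhdd2_zero_direction_le:
  fixes f :: "'a::euclidean_space \<Rightarrow> ereal"
  assumes "\<bar>f x\<bar> \<noteq> \<infinity>"
  shows "lhdd2 f x 0 \<le> 0"
proof -
  have "lhdd2 f x 0 \<le> Liminf (at_right 0) (\<lambda>t::real. ereal (2 / t\<^sup>2) * (f x - f x))"
    unfolding lhdd2_def
    using Liminf_prod_nhds_le_Liminf_slice[of "at_right 0" 0
        "\<lambda>(t, u'). ereal (2 / t\<^sup>2) * (f (x + t *\<^sub>R u') - f x)"]
    by simp
  also have "\<dots> = 0"
    using assms by (cases "f x") (simp_all add: Liminf_const)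
  finally show ?thesis .
qed

theorem mainTheorem5:
  fixes f :: "'a::euclidean_space \<Rightarrow> ereal"
  assumes "proper_fun f" and "invex_lh f"
  shows "second_order_invex f"
  unfolding second_order_invex_def
proof (intro ballI impI allI)
  obtain \<eta> where \<eta>: "\<forall>x \<in> edom f. \<forall>y. f y - f x \<ge> lhdd f x (\<eta> x y)"
    using assms(2) unfolding invex_lh_def by blast
  fix xb x assume xb: "xb \<in> edom f"
  have fin: "\<bar>f xb\<bar> \<noteq> \<infinity>"
    using xb assms(1) unfolding edom_def proper_fun_def by (cases "f xb") auto
  have "lhdd f xb (\<eta> xb x) + lhdd2 f xb 0 \<le> lhdd f xb (\<eta> xb x)"
    using add_left_mono[OF lhdd2_zero_direction_le[of f xb, OF fin]] by simp
  also have "\<dots> \<le> f x - f xb"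
    using \<eta> xb by blast
  finally show "\<exists>\<eta>1 \<eta>2. f x - f xb \<ge> lhdd f xb \<eta>1 + lhdd2 f xb \<eta>2"
    by blast
qed

end
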